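(* Let $X$ be a finite semi-permutation, and let $X'\subseteq X$ be any point set obtained from $X$ by repeatedly removing redundant points. Let $Y$ be any feasible solution for $X'$ such that every point of $Y$ lies on a row that is active for $X'$. Then $Y$ is also a feasible solution for $X$.
   Context: Points have integer coordinates. Two points are collinear if they share an $x$- or $y$-coordinate; for non-collinear $p,q$, $\square_{p,q}$ is the smallest closed axis-parallel rectangle containing both; the pair is satisfied in $S$ if some $r\in S\setminus\{p,q\}$ lies in $\square_{p,q}$; $S$ is satisfied if all its non-collinear pairs are. A row is active for $X$ if it contains a point of $X$; $X$ is a semi-permutation if each active row contains exactly one point of $X$. $Y$ is a feasible solution for $X$ if $X\cup Y$ is satisfied. Writing a semi-permutation as $X=\{p_1,\dots,p_m\}$ with $p_1.y<\dots<p_m.y$, a point $p_i$ (with $1<i<m$) is redundant if $p_{i-1}.x=p_i.x=p_{i+1}.x$; "repeatedly removing redundant points" means iteratively deleting a point that is redundant in the current set. *)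

theory Defs
  imports Main
begin

text \<open>Points are pairs of integers (x, y): fst = x-coordinate, snd = y-coordinate.
  A row is a horizontal line, identified by its y-coordinate.\<close>
type_synonym point = "int \<times> int"

definition collinear :: "point \<Rightarrow> point \<Rightarrow> bool" where
  "collinear p q \<longleftrightarrow> fst p = fst q \<or> snd p = snd q"

definition box :: "point \<Rightarrow> point \<Rightarrow> point set" where
  "box p q = {r. min (fst p) (fst q) \<le> fst r \<and> fst r \<le> max (fst p) (fst q) \<and>
                 min (snd p) (snd q) \<le> snd r \<and> snd r \<le> max (snd p) (snd q)}"

definition pair_satisfied :: "point set \<Rightarrow> point \<Rightarrow> point \<Rightarrow> bool" where
  "pair_satisfied S p q \<longleftrightarrow> (\<exists>r \<in> S - {p, q}. r \<in> box p q)"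

definition satisfied :: "point set \<Rightarrow> bool" where
  "satisfied S \<longleftrightarrow> (\<forall>p\<in>S. \<forall>q\<in>S. \<not> collinear p q \<longrightarrow> pair_satisfied S p q)"

definition active_rows :: "point set \<Rightarrow> int set" where
  "active_rows X = snd ` X"

definition semi_permutation :: "point set \<Rightarrow> bool" where
  "semi_permutation X \<longleftrightarrow> (\<forall>p\<in>X. \<forall>q\<in>X. snd p = snd q \<longrightarrow> p = q)"

definition feasible_solution :: "point set \<Rightarrow> point set \<Rightarrow> bool" where
  "feasible_solution X Y \<longleftrightarrow> satisfied (X \<union> Y)"

definition redundant :: "point set \<Rightarrow> point \<Rightarrow> bool" where
  "redundant X p \<longleftrightarrow> p \<in> X \<and>
     (\<exists>a\<in>X. \<exists>b\<in>X. snd a < snd p \<and> snd p < snd b \<and>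
        \<not> (\<exists>c\<in>X. snd a < snd c \<and> snd c < snd p) \<and>
        \<not> (\<exists>c\<in>X. snd p < snd c \<and> snd c < snd b) \<and>
        fst a = fst p \<and> fst p = fst b)"

definition remove_redundant_step :: "point set \<Rightarrow> point set \<Rightarrow> bool" where
  "remove_redundant_step X X' \<longleftrightarrow> (\<exists>p. redundant X p \<and> X' = X - {p})"

end

theory Submission
  imports Defs
begin

text \<open>Let \<open>p\<close> be redundant in \<open>X\<close>, with row neighbours \<open>a\<close> below and \<open>b\<close> above it, all three
  in one column. Putting \<open>p\<close> back into a satisfied set \<open>(X - {p}) \<union> Y\<close> only creates the new
  pairs \<open>(p, q)\<close>. If \<open>q\<close> lies on a row active for \<open>X\<close> other than that of \<open>p\<close>, this row is not
  strictly between the rows of \<open>a\<close> and \<open>b\<close>, so the box of \<open>p\<close> and \<open>q\<close> contains \<open>a\<close> or \<open>b\<close>.\<close>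

lemma box_commute: "box p q = box q p"
  unfolding box_def by (auto simp: min.commute max.commute)

lemma pair_satisfied_commute: "pair_satisfied S p q \<longleftrightarrow> pair_satisfied S q p"
  unfolding pair_satisfied_def by (auto simp: box_commute)

lemma pair_satisfied_mono: "pair_satisfied S p q \<Longrightarrow> S \<subseteq> T \<Longrightarrow> pair_satisfied T p q"
  unfolding pair_satisfied_def by blast

lemma satisfied_insertI:
  assumes "satisfied S"
    and "\<And>q. q \<in> S \<Longrightarrow> \<not> collinear p q \<Longrightarrow> pair_satisfied (insert p S) p q"
  shows "satisfied (insert p S)"
  unfolding satisfied_def
proof (intro ballI impI)
  fix u v assume u: "u \<in> insert p S" and v: "v \<in> insert p S" and "\<not> collinear u v"
  then have "\<not> collinear v u" by (auto simp: collinear_def)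
  consider "u = p" | "v = p" | "u \<in> S" "v \<in> S" using u v by blast
  then show "pair_satisfied (insert p S) u v"
  proof cases
    case 1
    then have "v \<in> S" using v \<open>\<not> collinear u v\<close> by (auto simp: collinear_def)
    then show ?thesis using 1 assms(2) \<open>\<not> collinear u v\<close> by blast
  next
    case 2
    then have "u \<in> S" using u \<open>\<not> collinear v u\<close> by (auto simp: collinear_def)
    then show ?thesis using 2 assms(2) \<open>\<not> collinear v u\<close> pair_satisfied_commute by blast
  next
    case 3
    then have "pair_satisfied S u v" using assms(1) \<open>\<not> collinear u v\<close> by (auto simp: satisfied_def)
    then show ?thesis by (rule pair_satisfied_mono) blast
  qed
qed

lemma redundant_pair_satisfied:
  assumes "redundant X p" and "\<not> collinear p q" and "snd q \<in> active_rows X"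
  shows "pair_satisfied X p q"
proof -
  obtain a b where "a \<in> X" "b \<in> X" and ab: "snd a < snd p" "snd p < snd b"
    and below: "\<not> (\<exists>c\<in>X. snd a < snd c \<and> snd c < snd p)"
    and above: "\<not> (\<exists>c\<in>X. snd p < snd c \<and> snd c < snd b)"
    and column: "fst a = fst p" "fst p = fst b"
    using assms(1) unfolding redundant_def by blast
  have q: "fst q \<noteq> fst p" "snd q \<noteq> snd p" using assms(2) by (auto simp: collinear_def)
  have "snd q \<le> snd a \<or> snd b \<le> snd q"
    using assms(3) below above q(2) unfolding active_rows_def by force
  then consider "snd q \<le> snd a" | "snd b \<le> snd q" by blast
  then show ?thesis
  proof cases
    case 1
    then have "a \<in> box p q" using ab column by (auto simp: box_def)
    then show ?thesis using \<open>a \<in> X\<close> ab q column by (auto simp: pair_satisfied_def)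
  next
    case 2
    then have "b \<in> box p q" using ab column by (auto simp: box_def)
    then show ?thesis using \<open>b \<in> X\<close> ab q column by (auto simp: pair_satisfied_def)
  qed
qed

lemma feasible_solution_remove_redundant:
  assumes "redundant X p" and "feasible_solution (X - {p}) Y"
    and "snd ` Y \<subseteq> active_rows X"
  shows "feasible_solution X Y"
proof -
  have "p \<in> X" using assms(1) by (simp add: redundant_def)
  then have X_Y: "X \<union> Y = insert p ((X - {p}) \<union> Y)" by blast
  have "pair_satisfied (X \<union> Y) p q"
    if "q \<in> (X - {p}) \<union> Y" and "\<not> collinear p q" for q
  proof -
    have "snd q \<in> active_rows X" using that(1) assms(3) by (auto simp: active_rows_def)
    with assms(1) \<open>\<not> collinear p q\<close> have "pair_satisfied X p q" by (rule redundant_pair_satisfied)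
    then show ?thesis by (rule pair_satisfied_mono) blast
  qed
  then show ?thesis using assms(2) satisfied_insertI unfolding feasible_solution_def X_Y by metis
qed

lemma remove_redundant_steps_subset: "remove_redundant_step\<^sup>*\<^sup>* X X' \<Longrightarrow> X' \<subseteq> X"
  by (induction rule: rtranclp_induct) (auto simp: remove_redundant_step_def)

theorem lemma6p3:
  fixes X X' Y :: "point set"
  assumes "finite X"
    and "semi_permutation X"
    and "remove_redundant_step\<^sup>*\<^sup>* X X'"
    and "finite Y"
    and "feasible_solution X' Y"
    and "\<forall>y\<in>Y. snd y \<in> active_rows X'"
  shows "feasible_solution X Y"
  using assms(3)
proof (induction rule: converse_rtranclp_induct)
  case base
  show ?case by (fact assms(5))
next
  case (step Z Z')
  then obtain p where "redundant Z p" and Z': "Z' = Z - {p}"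
    by (auto simp: remove_redundant_step_def)
  have "active_rows X' \<subseteq> active_rows Z"
    using remove_redundant_steps_subset[OF step(2)] Z' by (auto simp: active_rows_def)
  then have "snd ` Y \<subseteq> active_rows Z" using assms(6) by blast
  with \<open>redundant Z p\<close> step(3) show ?case
    unfolding Z' by (rule feasible_solution_remove_redundant)
qed

end
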